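(* Let $\sigma$ be any function from atoms to atoms. Then for every context $\Gamma$ and formula $A$, the sequent $\Gamma\vdash A$ is derivable if and only if $\mathrm{fr}(\Gamma)=\mathrm{fr}(A)$ and the sequent $\sigma\Gamma\vdash\sigma A$ is derivable.
   Context: Formulas are built from atoms ($p,q,\dots$) by a binary product: every formula is an atom or $A\bullet B$. A context is a finite (possibly empty) list of formulas; commas denote concatenation. The sequent calculus has exactly four rules (no weakening, contraction or exchange): ($\bullet L$) from $A,B,\Delta\vdash C$ infer $A\bullet B,\Delta\vdash C$ (the product must be leftmost); ($\bullet R$) from $\Gamma\vdash A$ and $\Delta\vdash B$ infer $\Gamma,\Delta\vdash A\bullet B$; ($id$) $A\vdash A$; ($cut$) from $\Theta\vdash A$ and $\Gamma,A,\Delta\vdash B$ infer $\Gamma,\Theta,\Delta\vdash B$; derivable means conclusion of a finite derivation tree with no undischarged premises. The frontier is the ordered list of atom occurrences: $\mathrm{fr}(p)=p$, $\mathrm{fr}(A\bullet B)=\mathrm{fr}(A),\mathrm{fr}(B)$, and the frontier of a context is the concatenation of the frontiers of its formulas. $\sigma A$, $\sigma\Gamma$ denote the result of replacing each atom $p$ by $\sigma(p)$. *)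

theory Defs
  imports Main
begin

datatype 'a form = Atom 'a | Prod "'a form" "'a form"

fun fr :: "'a form \<Rightarrow> 'a list" where
  "fr (Atom p) = [p]"
| "fr (Prod A B) = fr A @ fr B"

definition frc :: "'a form list \<Rightarrow> 'a list" where
  "frc \<Gamma> = concat (map fr \<Gamma>)"

fun subst :: "('a \<Rightarrow> 'a) \<Rightarrow> 'a form \<Rightarrow> 'a form" where
  "subst \<sigma> (Atom p) = Atom (\<sigma> p)"
| "subst \<sigma> (Prod A B) = Prod (subst \<sigma> A) (subst \<sigma> B)"

inductive derivable :: "'a form list \<Rightarrow> 'a form \<Rightarrow> bool" where
  prodL: "derivable (A # B # \<Delta>) C \<Longrightarrow> derivable (Prod A B # \<Delta>) C"
| prodR: "derivable \<Gamma> A \<Longrightarrow> derivable \<Delta> B \<Longrightarrow> derivable (\<Gamma> @ \<Delta>) (Prod A B)"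
| ident: "derivable [A] A"
| cut: "derivable \<Theta> A \<Longrightarrow> derivable (\<Gamma> @ [A] @ \<Delta>) B \<Longrightarrow> derivable (\<Gamma> @ \<Theta> @ \<Delta>) B"

end

theory Submission
  imports Defs
begin

text \<open>Derivations preserve frontiers, and substitution maps derivations to derivations, which
gives the forward direction. Conversely, a derivation of \<open>\<sigma>\<Gamma> \<turnstile> \<sigma>A\<close> is lifted rule by rule to
one of \<open>\<Gamma> \<turnstile> A\<close>. Every rule except cut lets the premises of the lifted sequent be read off
from \<open>\<Gamma>\<close> and \<open>A\<close>; this uses that a formula is determined by its image under \<open>\<sigma>\<close> together
with its frontier. For cut, the cut formula \<open>\<sigma>X\<close> is replaced by the formula of the same shape
as \<open>X\<close> whose frontier is that of the preimage of the left premise's context.\<close>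

lemma frc_Nil [simp]: "frc [] = []"
  by (simp add: frc_def)

lemma frc_Cons [simp]: "frc (A # \<Gamma>) = fr A @ frc \<Gamma>"
  by (simp add: frc_def)

lemma frc_append [simp]: "frc (\<Gamma> @ \<Delta>) = frc \<Gamma> @ frc \<Delta>"
  by (simp add: frc_def)

lemma fr_subst: "fr (subst \<sigma> A) = map \<sigma> (fr A)"
  by (induction A) auto

lemma frc_map_subst: "frc (map (subst \<sigma>) \<Gamma>) = map \<sigma> (frc \<Gamma>)"
  by (induction \<Gamma>) (auto simp: fr_subst)

lemma derivable_frc_eq_fr: "derivable \<Gamma> A \<Longrightarrow> frc \<Gamma> = fr A"
  by (induction rule: derivable.induct) auto

lemma derivable_subst: "derivable \<Gamma> A \<Longrightarrow> derivable (map (subst \<sigma>) \<Gamma>) (subst \<sigma> A)"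
proof (induction rule: derivable.induct)
  case (prodL A B \<Delta> C)
  then show ?case by (auto intro: derivable.prodL)
next
  case (prodR \<Gamma> A \<Delta> B)
  then show ?case by (auto dest: derivable.prodR)
next
  case (ident A)
  then show ?case by (auto intro: derivable.ident)
next
  case (cut \<Theta> A \<Gamma> \<Delta> B)
  then show ?case using derivable.cut by fastforce
qed

lemma subst_eq_fr_eq_imp_eq: "subst \<sigma> X = subst \<sigma> Y \<Longrightarrow> fr X = fr Y \<Longrightarrow> X = Y"
proof (induction X arbitrary: Y)
  case (Atom p)
  then show ?case by (cases Y) auto
next
  case (Prod A B)
  then obtain A' B' where Y: "Y = Prod A' B'"
    by (cases Y) auto
  with Prod.prems have subst_eq: "subst \<sigma> A = subst \<sigma> A'" "subst \<sigma> B = subst \<sigma> B'"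
    by auto
  then have "length (fr A) = length (fr A')"
    by (metis fr_subst length_map)
  with Prod.prems Y have "fr A = fr A'" "fr B = fr B'"
    by auto
  with Prod.IH subst_eq Y show ?case
    by auto
qed

fun relabel :: "'a form \<Rightarrow> 'a list \<Rightarrow> 'a form" where
  "relabel (Atom p) l = Atom (hd l)"
| "relabel (Prod A B) l =
     Prod (relabel A (take (length (fr A)) l)) (relabel B (drop (length (fr A)) l))"

lemma fr_relabel: "length l = length (fr X) \<Longrightarrow> fr (relabel X l) = l"
proof (induction X arbitrary: l)
  case (Atom p)
  then show ?case by (cases l) auto
next
  case (Prod A B)
  then show ?case by auto
qed

lemma subst_relabel: "map \<sigma> l = fr X \<Longrightarrow> subst \<sigma> (relabel X l) = X"
proof (induction X arbitrary: l)
  case (Atom p)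
  then show ?case by (cases l) auto
next
  case (Prod A B)
  then have "map \<sigma> (take (length (fr A)) l) = fr A" "map \<sigma> (drop (length (fr A)) l) = fr B"
    by (simp_all add: take_map[symmetric] drop_map[symmetric])
  with Prod.IH show ?case
    by auto
qed

lemma map_eq_append3_conv:
  assumes "map f xs = ys @ zs @ us"
  obtains ys' zs' us' where "xs = ys' @ zs' @ us'"
    and "ys = map f ys'" and "zs = map f zs'" and "us = map f us'"
proof -
  from assms obtain ys' rest where "xs = ys' @ rest" "ys = map f ys'" "zs @ us = map f rest"
    by (auto simp: map_eq_append_conv)
  moreover from \<open>zs @ us = map f rest\<close> obtain zs' us' where
    "rest = zs' @ us'" "zs = map f zs'" "us = map f us'"
    by (metis map_eq_append_conv)
  ultimately show thesis
    using that by blast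
qed

lemma derivable_unsubst:
  "derivable \<Gamma> A \<Longrightarrow> map (subst \<sigma>) \<Gamma>' = \<Gamma> \<Longrightarrow> subst \<sigma> A' = A \<Longrightarrow> frc \<Gamma>' = fr A'
   \<Longrightarrow> derivable \<Gamma>' A'"
proof (induction arbitrary: \<Gamma>' A' rule: derivable.induct)
  case (prodL A B \<Delta> C)
  then obtain P \<Delta>' where \<Gamma>': "\<Gamma>' = P # \<Delta>'" "subst \<sigma> P = Prod A B" "map (subst \<sigma>) \<Delta>' = \<Delta>"
    by auto
  then obtain A1 B1 where P: "P = Prod A1 B1" "subst \<sigma> A1 = A" "subst \<sigma> B1 = B"
    by (cases P) auto
  have "derivable (A1 # B1 # \<Delta>') A'"
    using prodL \<Gamma>' P by auto
  then show ?case
    using \<Gamma>' P derivable.prodL by auto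
next
  case (prodR \<Gamma> A \<Delta> B)
  obtain \<Gamma>1 \<Delta>1 where split: "\<Gamma>' = \<Gamma>1 @ \<Delta>1" "\<Gamma> = map (subst \<sigma>) \<Gamma>1" "\<Delta> = map (subst \<sigma>) \<Delta>1"
    using prodR.prems(1) by (auto simp: map_eq_append_conv)
  obtain A1 B1 where A': "A' = Prod A1 B1" "subst \<sigma> A1 = A" "subst \<sigma> B1 = B"
    using prodR.prems(2) by (cases A') auto
  have "length (frc \<Gamma>1) = length (fr A1)"
    using derivable_frc_eq_fr[OF prodR.hyps(1)] split A' by (metis frc_map_subst fr_subst length_map)
  moreover have "frc \<Gamma>1 @ frc \<Delta>1 = fr A1 @ fr B1"
    using prodR.prems(3) split A' by simp
  ultimately have "frc \<Gamma>1 = fr A1" "frc \<Delta>1 = fr B1"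
    by auto
  then show ?case
    using prodR.IH split A' derivable.prodR by blast
next
  case (ident A)
  then obtain A1 where "\<Gamma>' = [A1]" "subst \<sigma> A1 = A"
    by auto
  with ident have "A1 = A'"
    using subst_eq_fr_eq_imp_eq by auto
  then show ?case
    using \<open>\<Gamma>' = [A1]\<close> derivable.ident by auto
next
  case (cut \<Theta> X \<Gamma> \<Delta> B)
  obtain \<Gamma>1 \<Theta>1 \<Delta>1 where split: "\<Gamma>' = \<Gamma>1 @ \<Theta>1 @ \<Delta>1"
    "\<Gamma> = map (subst \<sigma>) \<Gamma>1" "\<Theta> = map (subst \<sigma>) \<Theta>1" "\<Delta> = map (subst \<sigma>) \<Delta>1"
    using cut.prems(1) by (rule map_eq_append3_conv)
  define X' where "X' = relabel X (frc \<Theta>1)"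
  have frc_\<Theta>1: "map \<sigma> (frc \<Theta>1) = fr X"
    using derivable_frc_eq_fr[OF cut.hyps(1)] split by (simp add: frc_map_subst)
  then have "fr X' = frc \<Theta>1"
    unfolding X'_def by (metis fr_relabel length_map)
  moreover have "subst \<sigma> X' = X"
    unfolding X'_def using frc_\<Theta>1 by (rule subst_relabel)
  ultimately have "derivable \<Theta>1 X'" "derivable (\<Gamma>1 @ [X'] @ \<Delta>1) A'"
    using cut.IH split cut.prems by auto
  then show ?case
    using derivable.cut split by fastforce
qed

theorem proposition1p16:
  fixes \<sigma> :: "'a \<Rightarrow> 'a" and \<Gamma> :: "'a form list" and A :: "'a form"
  shows "derivable \<Gamma> A \<longleftrightarrow>
           (frc \<Gamma> = fr A \<and> derivable (map (subst \<sigma>) \<Gamma>) (subst \<sigma> A))"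
  using derivable_frc_eq_fr derivable_subst derivable_unsubst by blast

end
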